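(* Let $k$ be a field and suppose $Y,Z$ are objects of $\mathcal S_2(k)$ of the same partition type $(\alpha,\beta,\gamma)$. (1) $\delta H(Y,Z)_X=0$ for $X=P_1^1$ and for $X=P_0^m$, $X=P_2^m$ for every $m\in\mathbb N$. (2) For every $r\ge1$, $\lim_{m\to\infty}\delta H(Y,Z)_{B_2^{m,r}}=\delta H(Y,Z)_{P_1^r}$.
   Context: For a partition $\alpha$ let $N_\alpha=\bigoplus_ik[T]/(T^{\alpha_i})$. $\mathcal S(k)$: objects are triples $(N_\alpha,N_\beta,f)$ with $f$ an injective $k[T]$-map; morphisms are pairs $(\psi_1,\psi_2)$ of $k[T]$-maps with $f'\psi_1=\psi_2f$. $\mathcal S_2(k)$: objects with $\alpha_1\le2$. Partition type $(\alpha,\beta,\gamma)$: $\operatorname{Coker}f\cong N_\gamma$. Pickets: $P_\ell^m=(N_{(\ell)},N_{(m)},\iota)$ for $0\le\ell\le\min\{2,m\}$, $\iota$ the inclusion of the unique $\ell$-dimensional $T$-invariant subspace. Bipickets: $B_2^{m,r}=(N_{(2)},N_{(m,r)},\delta)$ for $1\le r\le m-2$, with $\delta(1)=(T^{m-2},T^{r-1})$. For objects $X,Y,Z$ put $[X,Y]=\dim_k\operatorname{Hom}_{\mathcal S}(X,Y)$ and $\delta H(Y,Z)_X=[X,Z]-[X,Y]$. *)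

theory Defs
  imports Complex_Main "HOL-Library.Function_Algebras" "HOL-Library.Product_Plus"
begin

text \<open>N_alpha = direct sum of k[T]/(T^alpha_i) has k-basis e_(i,j) = T^j * (generator of i-th summand),
  i < length alpha, j < alpha!i.  Vectors are coordinate functions (nat*nat => 'k) vanishing
  outside this index set; k-linear maps are matrices M p q (coefficient at e_p of the image of e_q).\<close>

definition is_partition :: "nat list \<Rightarrow> bool" where
  "is_partition a \<longleftrightarrow> sorted_wrt (\<ge>) a \<and> 0 \<notin> set a"

definition idx :: "nat list \<Rightarrow> (nat \<times> nat) set" where
  "idx a = {(i, j). i < length a \<and> j < a ! i}"

definition vecs :: "nat list \<Rightarrow> (nat \<times> nat \<Rightarrow> 'k::field) set" where
  "vecs a = {v. \<forall>p. p \<notin> idx a \<longrightarrow> v p = 0}"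

text \<open>action of T on coordinates: T e_(i,j) = e_(i,j+1) (= 0 if j+1 = alpha_i)\<close>
definition shiftT :: "nat list \<Rightarrow> (nat \<times> nat \<Rightarrow> 'k::field) \<Rightarrow> (nat \<times> nat \<Rightarrow> 'k)" where
  "shiftT a v = (\<lambda>(i, j). if (i, j) \<in> idx a \<and> 0 < j then v (i, j - 1) else 0)"

type_synonym 'k mat = "nat \<times> nat \<Rightarrow> nat \<times> nat \<Rightarrow> 'k"

definition mat_apply :: "nat list \<Rightarrow> 'k::field mat \<Rightarrow> (nat \<times> nat \<Rightarrow> 'k) \<Rightarrow> (nat \<times> nat \<Rightarrow> 'k)" where
  "mat_apply a M v = (\<lambda>p. \<Sum>q\<in>idx a. M p q * v q)"

definition homT :: "nat list \<Rightarrow> nat list \<Rightarrow> 'k::field mat \<Rightarrow> bool" where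
  "homT a b M \<longleftrightarrow> (\<forall>p q. (p \<notin> idx b \<or> q \<notin> idx a) \<longrightarrow> M p q = 0)
     \<and> (\<forall>v \<in> vecs a. mat_apply a M (shiftT a v) = shiftT b (mat_apply a M v))"

text \<open>objects (N_alpha, N_beta, f) of S(k)\<close>
type_synonym 'k obj = "nat list \<times> nat list \<times> 'k mat"

definition is_obj :: "'k::field obj \<Rightarrow> bool" where
  "is_obj X = (case X of (a, b, f) \<Rightarrow> is_partition a \<and> is_partition b \<and> homT a b f
      \<and> inj_on (mat_apply a f) (vecs a))"

definition is_obj2 :: "'k::field obj \<Rightarrow> bool" where
  "is_obj2 X \<longleftrightarrow> is_obj X \<and> (\<forall>x \<in> set (fst X). x \<le> 2)"

text \<open>partition type (alpha, beta, gamma): Coker f is isomorphic to N_gamma,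
  i.e. there is a surjective k[T]-map N_beta -> N_gamma with kernel Im f\<close>
definition has_type :: "'k::field obj \<Rightarrow> nat list \<Rightarrow> nat list \<Rightarrow> nat list \<Rightarrow> bool" where
  "has_type X a b c \<longleftrightarrow> is_partition c \<and> fst X = a \<and> fst (snd X) = b \<and>
     (\<exists>g. homT b c g \<and> mat_apply b g ` vecs b = vecs c \<and>
          {v \<in> vecs b. mat_apply b g v = (\<lambda>_. 0)} = mat_apply a (snd (snd X)) ` vecs a)"

definition Hom :: "'k::field obj \<Rightarrow> 'k obj \<Rightarrow> ('k mat \<times> 'k mat) set" where
  "Hom X Y = (case X of (a, b, f) \<Rightarrow> case Y of (a', b', f') \<Rightarrow>
     {(p1, p2). homT a a' p1 \<and> homT b b' p2 \<and>
        (\<forall>v \<in> vecs a. mat_apply a' f' (mat_apply a p1 v) = mat_apply b p2 (mat_apply a f v))})"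

definition scaleM :: "'k::field \<Rightarrow> 'k mat \<times> 'k mat \<Rightarrow> 'k mat \<times> 'k mat" where
  "scaleM c P = ((\<lambda>p q. c * fst P p q), (\<lambda>p q. c * snd P p q))"

text \<open>[X,Y] = dim_k Hom(X,Y)\<close>
definition homdim :: "'k::field obj \<Rightarrow> 'k obj \<Rightarrow> nat" where
  "homdim X Y = vector_space.dim scaleM (Hom X Y)"

definition deltaH :: "'k::field obj \<Rightarrow> 'k obj \<Rightarrow> 'k obj \<Rightarrow> int" where
  "deltaH Y Z X = int (homdim X Z) - int (homdim X Y)"

text \<open>N_(n) for a one-part partition (n) (N_(0) = 0)\<close>
definition plist :: "nat \<Rightarrow> nat list" where
  "plist n = (if n = 0 then [] else [n])"

definition basisv :: "nat \<times> nat \<Rightarrow> (nat \<times> nat \<Rightarrow> 'k::field)" where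
  "basisv p = (\<lambda>q. if q = p then 1 else 0)"

text \<open>the k[T]-map N_(l) -> N_b sending the generator 1 to w\<close>
definition cyc_map :: "nat \<Rightarrow> nat list \<Rightarrow> (nat \<times> nat \<Rightarrow> 'k::field) \<Rightarrow> 'k mat" where
  "cyc_map l b w = (\<lambda>p q. if q \<in> idx (plist l) then (shiftT b ^^ snd q) w p else 0)"

text \<open>picket P_l^m: inclusion 1 |-> T^(m-l)\<close>
definition picket :: "nat \<Rightarrow> nat \<Rightarrow> 'k::field obj" where
  "picket l m = (plist l, plist m, cyc_map l (plist m) (basisv (0, m - l)))"

text \<open>bipicket B_2^(m,r): 1 |-> (T^(m-2), T^(r-1))\<close>
definition bipicket :: "nat \<Rightarrow> nat \<Rightarrow> 'k::field obj" where
  "bipicket m r = ([2], [m, r], cyc_map 2 [m, r] (basisv (0, m - 2) + basisv (1, r - 1)))"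

end

theory Submission
  imports Defs
begin

text \<open>A morphism out of a picket or a bipicket is determined by the images of the generators,
  subject to one compatibility condition with \<open>f\<close>, so each Hom space is the space of admissible
  generator images. For \<open>P\<^sub>1\<^sup>1\<close> this is the socle of \<open>N\<^sub>\<alpha>\<close>; for \<open>P\<^sub>0\<^sup>m\<close> the condition is void and
  \<open>f\<close> does not enter at all. For \<open>P\<^sub>2\<^sup>m\<close> the admissible \<open>y \<in> N\<^sub>\<beta>\<close> are those with
  \<open>T\<^sup>m\<^sup>-\<^sup>2 y \<in> Im f = Ker g\<close> (here \<open>T\<^sup>2 N\<^sub>\<alpha> = 0\<close> is used), so by rank--nullity
  \<open>[P\<^sub>2\<^sup>m, Y] = dim N\<^sub>\<beta> - dim T\<^sup>m\<^sup>-\<^sup>2 N\<^sub>\<gamma>\<close>. For \<open>B\<^sub>2\<^sup>m\<^sup>,\<^sup>r\<close> with \<open>m\<close> large, \<open>T\<^sup>m\<^sup>-\<^sup>2\<close> kills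
  \<open>N\<^sub>\<beta>\<close>: the image of the first generator is arbitrary and that of the second runs through the
  generator images of morphisms \<open>P\<^sub>1\<^sup>r \<rightarrow> Y\<close>, whence \<open>[B\<^sub>2\<^sup>m\<^sup>,\<^sup>r, Y] = dim N\<^sub>\<beta> + [P\<^sub>1\<^sup>r, Y]\<close>.
  All these numbers depend on \<open>Y\<close> only through its partition type.\<close>

section \<open>Linear algebra inside infinite-dimensional spaces\<close>

text \<open>The coordinate spaces used below are infinite-dimensional function spaces, while the
  library proves rank--nullity and invariance of dimension under injections only in
  \<open>finite_dimensional_vector_space\<close>; we prove them relative to a subspace.\<close>

context vector_space begin

lemma eq_0_if_in_span_and_span_diff:
  assumes C: "independent C" "finite C" and A: "A \<subseteq> C"
    and x: "x \<in> span A" "x \<in> span (C - A)"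
  shows "x = 0"
proof -
  have fA: "finite A" and fCA: "finite (C - A)" using A C(2) finite_subset by auto
  obtain u where u: "x = (\<Sum>v\<in>A. u v *s v)" using x(1) span_finite[OF fA] by blast
  obtain w where w: "x = (\<Sum>v\<in>C - A. w v *s v)" using x(2) span_finite[OF fCA] by blast
  define c where "c v = (if v \<in> A then u v else - w v)" for v
  have "(\<Sum>v\<in>C. c v *s v) = (\<Sum>v\<in>A. c v *s v) + (\<Sum>v\<in>C - A. c v *s v)"
    using sum.subset_diff[OF A C(2)] by (simp add: add.commute)
  also have "\<dots> = x - x"
    using u w by (simp add: c_def sum_negf)
  finally have c0: "\<forall>v\<in>C. c v = 0" using C dependent_finite by auto
  have "u v = 0" if "v \<in> A" for v using bspec[OF c0, of v] A that by (auto simp: c_def)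
  then show ?thesis unfolding u by (simp add: sum.neutral)
qed

end

context vector_space_pair begin

lemma dim_image_eq_of_inj_on:
  assumes f: "Vector_Spaces.linear s1 s2 f" and S: "vs1.subspace S" and inj: "inj_on f S"
  shows "vs2.dim (f ` S) = vs1.dim S"
proof -
  obtain B where B: "B \<subseteq> S" "vs1.independent B" "S \<subseteq> vs1.span B" "card B = vs1.dim S"
    using vs1.basis_exists .
  have span: "vs1.span B = S" using B S vs1.span_subspace by blast
  have "vs2.independent (f ` B)"
    using linear_dependent_inj_imageD[OF f] inj B(2) by (auto simp: span)
  moreover have "f ` S \<subseteq> vs2.span (f ` B)"
    using linear_span_image[OF f] span by simp
  ultimately have "vs2.dim (f ` S) = card (f ` B)"
    by (intro vs2.dim_unique[OF image_mono[OF B(1)]]) auto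
  also have "\<dots> = card B"
    using card_image inj_on_subset[OF inj B(1)] by blast
  finally show ?thesis using B(4) by simp
qed

lemma dim_kernel_add_dim_image:
  assumes h: "Vector_Spaces.linear s1 s2 h" and S: "vs1.subspace S" and F: "finite F" "S \<subseteq> vs1.span F"
  shows "vs1.dim {x \<in> S. h x = 0} + vs2.dim (h ` S) = vs1.dim S"
proof -
  let ?K = "{x \<in> S. h x = 0}"
  \<comment> \<open>Extend a basis \<open>K0\<close> of the kernel to a basis \<open>C\<close> of \<open>S\<close>; then \<open>h\<close> is injective on
    \<open>span (C - K0)\<close> and maps it onto \<open>h ` S\<close>.\<close>
  obtain K0 where K0: "K0 \<subseteq> ?K" "vs1.independent K0" "?K \<subseteq> vs1.span K0" "card K0 = vs1.dim ?K"
    using vs1.basis_exists .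
  obtain C where C: "K0 \<subseteq> C" "C \<subseteq> S" "vs1.independent C" "S \<subseteq> vs1.span C"
    using vs1.maximal_independent_subset_extend[of K0 S] K0(1,2) by blast
  have fC: "finite C" using vs1.independent_span_bound[OF F(1) C(3)] C(2) F(2) by blast
  have spanC: "vs1.span C = S" using C S vs1.span_subspace by blast
  define D where "D = C - K0"
  have indD: "vs1.independent D" using C(3) vs1.independent_mono by (auto simp: D_def)
  have spanD: "vs1.subspace (vs1.span D)" "vs1.span D \<subseteq> S"
    by (rule vs1.subspace_span, rule vs1.span_minimal[OF _ S]) (use C(2) in \<open>auto simp: D_def\<close>)
  have inj: "inj_on h (vs1.span D)"
    unfolding linear_inj_on_iff_eq_0[OF h spanD(1)]
  proof (intro ballI impI)
    fix x assume x: "x \<in> vs1.span D" "h x = 0"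
    then have "x \<in> vs1.span K0" using spanD(2) K0(3) by blast
    then show "x = 0"
      using vs1.eq_0_if_in_span_and_span_diff[OF C(3) fC C(1)] x(1) by (simp add: D_def)
  qed
  have "vs2.span (h ` C) = vs2.span (h ` D)"
  proof -
    have "h ` C \<subseteq> insert 0 (h ` D)" using K0(1) by (auto simp: D_def)
    then have "vs2.span (h ` C) \<subseteq> vs2.span (h ` D)" by (metis vs2.span_mono vs2.span_insert_0)
    moreover have "vs2.span (h ` D) \<subseteq> vs2.span (h ` C)" by (intro vs2.span_mono) (auto simp: D_def)
    ultimately show ?thesis by blast
  qed
  then have img: "h ` S = h ` vs1.span D"
    using linear_span_image[OF h] spanC by metis
  have "vs2.dim (h ` S) = card D"
    using img dim_image_eq_of_inj_on[OF h spanD(1) inj] vs1.dim_eq_card_independent[OF indD]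
    by simp
  moreover have "card D = card C - card K0" using fC C(1) by (simp add: D_def card_Diff_subset finite_subset)
  moreover have "card K0 \<le> card C" using fC C(1) card_mono by blast
  moreover have "vs1.dim S = card C" using vs1.dim_unique[OF C(2,4,3) refl] .
  ultimately show ?thesis using K0(4) by linarith
qed

end

type_synonym 'k vec = "nat \<times> nat \<Rightarrow> 'k"

definition scaleV :: "'k::field \<Rightarrow> 'k vec \<Rightarrow> 'k vec" where
  "scaleV c v = (\<lambda>p. c * v p)"

definition column :: "'k mat \<Rightarrow> nat \<times> nat \<Rightarrow> 'k vec" where
  "column M q = (\<lambda>p. M p q)"

interpretation Vec: vector_space "scaleV :: 'k::field \<Rightarrow> 'k vec \<Rightarrow> 'k vec"
  by unfold_locales (auto simp: scaleV_def fun_eq_iff algebra_simps)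

interpretation Mat: vector_space "scaleM :: 'k::field \<Rightarrow> 'k mat \<times> 'k mat \<Rightarrow> 'k mat \<times> 'k mat"
  by unfold_locales (auto simp: scaleM_def fun_eq_iff algebra_simps)

interpretation MatVec: vector_space_pair "scaleM :: 'k::field \<Rightarrow> _" "scaleV :: 'k::field \<Rightarrow> _"
  by unfold_locales

interpretation VecVec: vector_space_pair "scaleV :: 'k::field \<Rightarrow> _" "scaleV :: 'k::field \<Rightarrow> _"
  by unfold_locales

lemma linear_VecVecI:
  fixes h :: "'k::field vec \<Rightarrow> 'k vec"
  assumes "\<And>u v. h (u + v) = h u + h v" and "\<And>c u. h (scaleV c u) = scaleV c (h u)"
  shows "Vector_Spaces.linear scaleV scaleV h"
  using assms by (simp add: Vector_Spaces.linear_iff Vec.vector_space_axioms)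

lemma linear_MatVecI:
  fixes h :: "'k::field mat \<times> 'k mat \<Rightarrow> 'k vec"
  assumes "\<And>P Q. h (P + Q) = h P + h Q" and "\<And>c P. h (scaleM c P) = scaleV c (h P)"
  shows "Vector_Spaces.linear scaleM scaleV h"
  using assms by (simp add: Vector_Spaces.linear_iff Vec.vector_space_axioms Mat.vector_space_axioms)

lemma linear_column_snd: "Vector_Spaces.linear scaleM scaleV (\<lambda>P :: 'k::field mat \<times> 'k mat. column (snd P) q)"
  by (rule linear_MatVecI) (auto simp: column_def scaleM_def scaleV_def)

lemma linear_funpow:
  fixes f :: "'k::field vec \<Rightarrow> 'k vec"
  assumes "Vector_Spaces.linear scaleV scaleV f"
  shows "Vector_Spaces.linear scaleV scaleV (f ^^ n)"
proof (induction n)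
  case 0
  show ?case unfolding funpow.simps(1) by (rule Vec.linear_id)
next
  case (Suc n)
  show ?case unfolding funpow.simps(2) by (rule Vector_Spaces.linear_compose[OF Suc.IH assms])
qed

lemma funpow_pred_apply: "0 < n \<Longrightarrow> f ((f ^^ (n - 1)) x) = (f ^^ n) x"
  by (metis Suc_pred' comp_apply funpow.simps(2))

lemma finite_idx: "finite (idx a)"
proof -
  have "idx a \<subseteq> {..<length a} \<times> {..<sum_list a}"
    by (auto simp: idx_def elem_le_sum_list intro: less_le_trans)
  then show ?thesis by (rule finite_subset) auto
qed

lemma idx_downward: "(i, j) \<in> idx a \<Longrightarrow> j' \<le> j \<Longrightarrow> (i, j') \<in> idx a"
  by (auto simp: idx_def)

lemma idx_generator: "i < length a \<Longrightarrow> 0 \<notin> set a \<Longrightarrow> (i, 0) \<in> idx a"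
  by (simp add: idx_def) (metis gr0I nth_mem)

lemma basisv_in_vecs: "q \<in> idx a \<Longrightarrow> basisv q \<in> vecs a"
  by (auto simp: vecs_def basisv_def)

lemma vecs_eq_0: "v \<in> vecs a \<Longrightarrow> p \<notin> idx a \<Longrightarrow> v p = 0"
  unfolding vecs_def by blast

lemma zero_in_vecs: "0 \<in> vecs a"
  by (simp add: vecs_def)

lemma sum_fun_apply: "(\<Sum>x\<in>A. f x) y = (\<Sum>x\<in>A. f x y)"
  by (induction A rule: infinite_finite_induct) auto

lemma vecs_subset_span_basisv: "vecs a \<subseteq> Vec.span (basisv ` idx a)"
proof
  fix v :: "'k::field vec" assume v: "v \<in> vecs a"
  have "v = (\<Sum>q\<in>idx a. scaleV (v q) (basisv q))"
  proof (rule ext)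
    fix p
    have "(\<Sum>q\<in>idx a. scaleV (v q) (basisv q)) p = (\<Sum>q\<in>idx a. if q = p then v q else 0)"
      unfolding sum_fun_apply scaleV_def basisv_def by (intro sum.cong) auto
    also have "\<dots> = v p"
      using v finite_idx[of a] unfolding vecs_def by (cases p) (simp add: sum.delta)
    finally show "v p = (\<Sum>q\<in>idx a. scaleV (v q) (basisv q)) p" ..
  qed
  also have "\<dots> \<in> Vec.span (basisv ` idx a)"
    by (intro Vec.span_sum Vec.span_scale Vec.span_base) auto
  finally show "v \<in> Vec.span (basisv ` idx a)" .
qed

lemma subspace_vecs: "Vec.subspace (vecs a)"
  by (auto simp: Vec.subspace_def vecs_def scaleV_def)

lemma linear_mat_apply: "Vector_Spaces.linear scaleV scaleV (mat_apply a M :: 'k::field vec \<Rightarrow> _)"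
  by (rule linear_VecVecI)
    (auto simp: mat_apply_def scaleV_def fun_eq_iff algebra_simps sum.distrib sum_distrib_left)

lemma linear_shiftT: "Vector_Spaces.linear scaleV scaleV (shiftT a :: 'k::field vec \<Rightarrow> _)"
  by (rule linear_VecVecI) (auto simp: shiftT_def scaleV_def fun_eq_iff)

lemma mat_apply_basisv:
  assumes "q \<in> idx a"
  shows "mat_apply a M (basisv q) = column M q"
proof (rule ext)
  fix p
  have "mat_apply a M (basisv q) p = (\<Sum>q'\<in>idx a. if q' = q then M p q' else 0)"
    unfolding mat_apply_def basisv_def by (intro sum.cong) auto
  then show "mat_apply a M (basisv q) p = column M q p"
    using assms finite_idx by (simp add: sum.delta column_def)
qed

lemma linear_eq_on_vecs_iff:
  fixes L R :: "'k::field vec \<Rightarrow> 'k vec"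
  assumes "Vector_Spaces.linear scaleV scaleV L" and "Vector_Spaces.linear scaleV scaleV R"
  shows "(\<forall>v\<in>vecs a. L v = R v) \<longleftrightarrow> (\<forall>q\<in>idx a. L (basisv q) = R (basisv q))"
proof (intro iffI ballI)
  fix v :: "'k vec" assume basis: "\<forall>q\<in>idx a. L (basisv q) = R (basisv q)" and "v \<in> vecs a"
  then have "v \<in> Vec.span (basisv ` idx a)" using vecs_subset_span_basisv by blast
  then show "L v = R v"
    by (rule VecVec.linear_eq_on_span[OF assms, rotated]) (use basis in blast)
qed (use basisv_in_vecs in blast)

lemma shiftT_in_vecs: "shiftT b v \<in> vecs b"
  by (auto simp: vecs_def shiftT_def)

lemma funpow_shiftT_in_vecs: "v \<in> vecs b \<Longrightarrow> (shiftT b ^^ n) v \<in> vecs b"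
  by (induction n) (auto simp: shiftT_in_vecs)

lemma funpow_shiftT_apply:
  "v \<in> vecs b \<Longrightarrow> (shiftT b ^^ n) v (i, j) = (if (i, j) \<in> idx b \<and> n \<le> j then v (i, j - n) else 0)"
proof (induction n arbitrary: i j)
  case 0
  then show ?case by (auto simp: vecs_def)
next
  case (Suc n)
  then show ?case by (auto simp: shiftT_def dest: idx_downward[of _ _ _ "j - 1"])
qed

lemma funpow_shiftT_eq_0:
  assumes "v \<in> vecs b" and "\<forall>x\<in>set b. x \<le> n"
  shows "(shiftT b ^^ n) v = 0"
proof (rule ext, clarify)
  fix i j
  have "(i, j) \<in> idx b \<Longrightarrow> j < n"
    using assms(2) by (auto simp: idx_def) (metis nth_mem order_less_le_trans)
  then show "(shiftT b ^^ n) v (i, j) = 0 (i, j)" by (auto simp: funpow_shiftT_apply[OF assms(1)])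
qed

lemma shiftT_basisv:
  "(i, j) \<in> idx a \<Longrightarrow> shiftT a (basisv (i, j)) = (if (i, Suc j) \<in> idx a then basisv (i, Suc j) else 0)"
  by (auto simp: shiftT_def basisv_def idx_def fun_eq_iff)

section \<open>\<open>k[T]\<close>-linear maps\<close>

lemma homT_eq_0: "homT a b M \<Longrightarrow> p \<notin> idx b \<or> q \<notin> idx a \<Longrightarrow> M p q = 0"
  unfolding homT_def by blast

lemma homT_mat_apply_in_vecs: "homT a b M \<Longrightarrow> mat_apply a M v \<in> vecs b"
  by (auto simp: homT_def vecs_def mat_apply_def intro!: sum.neutral)

lemma homT_funpow_commute:
  assumes "homT a b M" and "v \<in> vecs a"
  shows "mat_apply a M ((shiftT a ^^ n) v) = (shiftT b ^^ n) (mat_apply a M v)"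
proof (induction n)
  case (Suc n)
  then show ?case
    using assms funpow_shiftT_in_vecs[OF assms(2), of n] by (simp add: homT_def)
qed simp

lemma homT_iff_columns:
  "homT a b M \<longleftrightarrow> (\<forall>p q. p \<notin> idx b \<or> q \<notin> idx a \<longrightarrow> M p q = 0) \<and>
     (\<forall>(i, j)\<in>idx a. shiftT b (column M (i, j))
                        = (if (i, Suc j) \<in> idx a then column M (i, Suc j) else 0))"
proof -
  have lin: "Vector_Spaces.linear scaleV scaleV (mat_apply a M \<circ> shiftT a)"
    "Vector_Spaces.linear scaleV scaleV (shiftT b \<circ> mat_apply a M)"
    by (rule Vector_Spaces.linear_compose[OF linear_shiftT linear_mat_apply],
        rule Vector_Spaces.linear_compose[OF linear_mat_apply linear_shiftT])
  have gen: "mat_apply a M (shiftT a (basisv (i, j))) = (if (i, Suc j) \<in> idx a then column M (i, Suc j) else 0)"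
    if "(i, j) \<in> idx a" for i j
    using that VecVec.linear_0[OF linear_mat_apply]
    by (cases "(i, Suc j) \<in> idx a") (simp_all add: shiftT_basisv mat_apply_basisv)
  have "(\<forall>v\<in>vecs a. mat_apply a M (shiftT a v) = shiftT b (mat_apply a M v)) \<longleftrightarrow>
      (\<forall>q\<in>idx a. mat_apply a M (shiftT a (basisv q)) = shiftT b (mat_apply a M (basisv q)))"
    using linear_eq_on_vecs_iff[OF lin] by simp
  also have "\<dots> \<longleftrightarrow> (\<forall>(i, j)\<in>idx a. shiftT b (column M (i, j))
                        = (if (i, Suc j) \<in> idx a then column M (i, Suc j) else 0))"
  proof -
    have "mat_apply a M (shiftT a (basisv (i, j))) = shiftT b (mat_apply a M (basisv (i, j))) \<longleftrightarrow>
        shiftT b (column M (i, j)) = (if (i, Suc j) \<in> idx a then column M (i, Suc j) else 0)"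
      if "(i, j) \<in> idx a" for i j
      unfolding gen[OF that] mat_apply_basisv[OF that] by (rule eq_commute)
    then show ?thesis unfolding Ball_def split_paired_All by simp
  qed
  finally show ?thesis unfolding homT_def by blast
qed

text \<open>The \<open>k[T]\<close>-map \<open>N\<^sub>a \<rightarrow> N\<^sub>b\<close> sending the \<open>i\<close>-th generator to \<open>ws i\<close>.\<close>

definition gen_map :: "nat list \<Rightarrow> nat list \<Rightarrow> (nat \<Rightarrow> 'k::field vec) \<Rightarrow> 'k mat" where
  "gen_map a b ws = (\<lambda>p q. if q \<in> idx a then (shiftT b ^^ snd q) (ws (fst q)) p else 0)"

lemma column_gen_map: "(i, j) \<in> idx a \<Longrightarrow> column (gen_map a b ws) (i, j) = (shiftT b ^^ j) (ws i)"
  by (simp add: gen_map_def column_def)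

lemma gen_map_cong:
  assumes "\<And>i. i < length a \<Longrightarrow> ws i = ws' i"
  shows "gen_map a b ws = gen_map a b ws'"
  unfolding gen_map_def using assms by (intro ext) (auto simp: idx_def)

lemma cyc_map_eq_gen_map: "cyc_map l b w = gen_map (plist l) b (\<lambda>_. w)"
  by (simp add: cyc_map_def gen_map_def)

lemma homT_iff_gen_map:
  assumes a0: "0 \<notin> set a"
  shows "homT a b M \<longleftrightarrow>
    (\<exists>ws. (\<forall>i<length a. ws i \<in> vecs b \<and> (shiftT b ^^ (a ! i)) (ws i) = 0) \<and> M = gen_map a b ws)"
proof
  assume M: "homT a b M"
  then have supp: "\<And>p q. p \<notin> idx b \<or> q \<notin> idx a \<Longrightarrow> M p q = 0"
    and cols: "\<And>i j. (i, j) \<in> idx a \<Longrightarrow>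
      shiftT b (column M (i, j)) = (if (i, Suc j) \<in> idx a then column M (i, Suc j) else 0)"
    unfolding homT_iff_columns by blast+
  define ws where "ws i = column M (i, 0)" for i
  have col: "column M (i, j) = (shiftT b ^^ j) (ws i)" if "(i, j) \<in> idx a" for i j
    using that
  proof (induction j)
    case 0
    then show ?case by (simp add: ws_def)
  next
    case (Suc j)
    then have "(i, j) \<in> idx a" using idx_downward le_SucI by blast
    then show ?case using cols[of i j] Suc by simp
  qed
  show "\<exists>ws. (\<forall>i<length a. ws i \<in> vecs b \<and> (shiftT b ^^ (a ! i)) (ws i) = 0) \<and> M = gen_map a b ws"
  proof (intro exI conjI allI impI)
    fix i assume i: "i < length a"
    show "ws i \<in> vecs b" using supp by (auto simp: vecs_def ws_def column_def)
    have pos: "0 < a ! i" using i a0 by (metis gr0I nth_mem)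
    have last: "(i, a ! i - 1) \<in> idx a" "(i, Suc (a ! i - 1)) \<notin> idx a" using i pos by (auto simp: idx_def)
    have "(shiftT b ^^ a ! i) (ws i) = shiftT b ((shiftT b ^^ (a ! i - 1)) (ws i))"
      by (rule funpow_pred_apply[OF pos, symmetric])
    also have "\<dots> = 0" using cols[OF last(1)] last(2) col[OF last(1)] by simp
    finally show "(shiftT b ^^ a ! i) (ws i) = 0" .
  next
    show "M = gen_map a b ws"
      using supp col by (auto simp: fun_eq_iff gen_map_def column_def)
  qed
next
  assume "\<exists>ws. (\<forall>i<length a. ws i \<in> vecs b \<and> (shiftT b ^^ (a ! i)) (ws i) = 0) \<and> M = gen_map a b ws"
  then obtain ws where ws: "\<And>i. i < length a \<Longrightarrow> ws i \<in> vecs b"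
      "\<And>i. i < length a \<Longrightarrow> (shiftT b ^^ (a ! i)) (ws i) = 0"
    and M: "M = gen_map a b ws" by blast
  have "M p q = 0" if "p \<notin> idx b \<or> q \<notin> idx a" for p q
  proof (cases "q \<in> idx a")
    case True
    then have "(shiftT b ^^ snd q) (ws (fst q)) \<in> vecs b"
      using ws(1) by (intro funpow_shiftT_in_vecs) (auto simp: idx_def)
    then show ?thesis using that True vecs_eq_0 by (simp add: M gen_map_def)
  qed (simp add: M gen_map_def)
  moreover have "shiftT b (column M (i, j)) = (if (i, Suc j) \<in> idx a then column M (i, Suc j) else 0)"
    if ij: "(i, j) \<in> idx a" for i j
  proof -
    have step: "shiftT b (column M (i, j)) = (shiftT b ^^ Suc j) (ws i)"
      unfolding M column_gen_map[OF ij] by simp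
    show ?thesis
    proof (cases "(i, Suc j) \<in> idx a")
      case True
      then show ?thesis using step unfolding M column_gen_map[OF True] by simp
    next
      case False
      then have "a ! i = Suc j" and "i < length a" using ij by (auto simp: idx_def)
      then have "(shiftT b ^^ Suc j) (ws i) = 0" using ws(2) by metis
      then show ?thesis using step False by simp
    qed
  qed
  ultimately show "homT a b M" unfolding homT_iff_columns by blast
qed

definition mat_comp :: "nat list \<Rightarrow> 'k::field mat \<Rightarrow> 'k mat \<Rightarrow> 'k mat" where
  "mat_comp b N M = (\<lambda>p q. mat_apply b N (column M q) p)"

lemma column_mat_comp: "column (mat_comp b N M) q = mat_apply b N (column M q)"
  by (simp add: mat_comp_def column_def)

lemma mat_apply_mat_comp: "mat_apply a (mat_comp b N M) v = mat_apply b N (mat_apply a M v)"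
  unfolding mat_comp_def mat_apply_def column_def
  by (rule ext) (simp add: sum_distrib_left sum_distrib_right mult.assoc sum.swap[of _ "idx b"])

lemma homT_mat_comp:
  assumes M: "homT a b M" and N: "homT b c N"
  shows "homT a c (mat_comp b N M)"
proof -
  have "mat_comp b N M p q = 0" if "p \<notin> idx c \<or> q \<notin> idx a" for p q
    using that
  proof
    assume "p \<notin> idx c"
    moreover have "mat_apply b N (column M q) \<in> vecs c" by (rule homT_mat_apply_in_vecs[OF N])
    ultimately show ?thesis unfolding vecs_def mat_comp_def by blast
  next
    assume "q \<notin> idx a"
    then have "column M q = 0" using homT_eq_0[OF M] by (auto simp: column_def)
    then show ?thesis by (simp add: mat_comp_def VecVec.linear_0[OF linear_mat_apply])
  qed
  moreover have "mat_apply a (mat_comp b N M) (shiftT a v) = shiftT c (mat_apply a (mat_comp b N M) v)"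
    if "v \<in> vecs a" for v
    using M N homT_mat_apply_in_vecs[OF M] that by (simp add: mat_apply_mat_comp homT_def)
  ultimately show ?thesis by (simp add: homT_def)
qed

lemma homT_eq_on_vecs_iff:
  assumes a0: "0 \<notin> set a" and M: "homT a b M" and N: "homT a b N"
  shows "(\<forall>v\<in>vecs a. mat_apply a M v = mat_apply a N v) \<longleftrightarrow>
    (\<forall>i<length a. column M (i, 0) = column N (i, 0))"
proof
  assume "\<forall>v\<in>vecs a. mat_apply a M v = mat_apply a N v"
  then show "\<forall>i<length a. column M (i, 0) = column N (i, 0)"
    using basisv_in_vecs idx_generator[OF _ a0] mat_apply_basisv by metis
next
  assume gen: "\<forall>i<length a. column M (i, 0) = column N (i, 0)"
  obtain ws where ws: "M = gen_map a b ws" using M homT_iff_gen_map[OF a0] by blast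
  obtain ws' where ws': "N = gen_map a b ws'" using N homT_iff_gen_map[OF a0] by blast
  have "ws i = ws' i" if "i < length a" for i
  proof -
    have "column M (i, 0) = ws i" "column N (i, 0) = ws' i"
      using column_gen_map[OF idx_generator[OF that a0]] by (simp_all add: ws ws')
    then show ?thesis using gen that by simp
  qed
  then show "\<forall>v\<in>vecs a. mat_apply a M v = mat_apply a N v"
    using gen_map_cong ws ws' by metis
qed

lemma homT_one_part_iff:
  assumes "0 < l"
  shows "homT [l] b M \<longleftrightarrow> (\<exists>y\<in>vecs b. (shiftT b ^^ l) y = 0 \<and> M = gen_map [l] b (\<lambda>_. y))"
proof -
  have "gen_map [l] b ws = gen_map [l] b (\<lambda>_. ws 0)"  for ws
    by (rule gen_map_cong) simp
  then show ?thesis using assms by (auto simp: homT_iff_gen_map)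
qed

lemma homT_two_parts_iff:
  assumes "0 < m" and "0 < r"
  shows "homT [m, r] b M \<longleftrightarrow> (\<exists>y1\<in>vecs b. \<exists>y2\<in>vecs b. (shiftT b ^^ m) y1 = 0 \<and>
    (shiftT b ^^ r) y2 = 0 \<and> M = gen_map [m, r] b (\<lambda>i. if i = 0 then y1 else y2))"
    (is "_ \<longleftrightarrow> ?R")
proof -
  have "homT [m, r] b M \<longleftrightarrow> (\<exists>ws. (\<forall>i<length [m, r]. ws i \<in> vecs b \<and> (shiftT b ^^ ([m, r] ! i)) (ws i) = 0)
      \<and> M = gen_map [m, r] b ws)"
    using assms by (simp add: homT_iff_gen_map)
  also have "\<dots> \<longleftrightarrow> ?R"
  proof
    assume "\<exists>ws. (\<forall>i<length [m, r]. ws i \<in> vecs b \<and> (shiftT b ^^ ([m, r] ! i)) (ws i) = 0) \<and> M = gen_map [m, r] b ws"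
    then obtain ws where ws: "\<forall>i<length [m, r]. ws i \<in> vecs b \<and> (shiftT b ^^ ([m, r] ! i)) (ws i) = 0"
      and M: "M = gen_map [m, r] b ws" by blast
    have "M = gen_map [m, r] b (\<lambda>i. if i = 0 then ws 0 else ws (Suc 0))"
      unfolding M by (rule gen_map_cong) (auto simp: less_Suc_eq)
    moreover have "ws 0 \<in> vecs b" "(shiftT b ^^ m) (ws 0) = 0"
      "ws (Suc 0) \<in> vecs b" "(shiftT b ^^ r) (ws (Suc 0)) = 0"
      using ws[rule_format, of 0] ws[rule_format, of "Suc 0"] by auto
    ultimately show ?R by blast
  next
    assume ?R
    then obtain y1 y2 where "y1 \<in> vecs b" "y2 \<in> vecs b" "(shiftT b ^^ m) y1 = 0" "(shiftT b ^^ r) y2 = 0"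
      and "M = gen_map [m, r] b (\<lambda>i. if i = 0 then y1 else y2)" by blast
    then show "\<exists>ws. (\<forall>i<length [m, r]. ws i \<in> vecs b \<and> (shiftT b ^^ ([m, r] ! i)) (ws i) = 0) \<and> M = gen_map [m, r] b ws"
      by (intro exI[of _ "\<lambda>i. if i = 0 then y1 else y2"]) (auto simp: less_Suc_eq)
  qed
  finally show ?thesis .
qed

lemma mat_apply_gen_map_basisv:
  "(i, j) \<in> idx a \<Longrightarrow> mat_apply a (gen_map a b ws) (basisv (i, j)) = (shiftT b ^^ j) (ws i)"
  by (simp add: mat_apply_basisv column_gen_map)

lemma funpow_shiftT_basisv_eq_0:
  assumes "(i, j) \<in> idx b" and "b ! i \<le> j + n"
  shows "(shiftT b ^^ n) (basisv (i, j)) = 0"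
proof (rule ext, clarify)
  fix i' j'
  show "(shiftT b ^^ n) (basisv (i, j)) (i', j') = 0 (i', j')"
    unfolding funpow_shiftT_apply[OF basisv_in_vecs[OF assms(1)]]
    using assms by (auto simp: basisv_def idx_def)
qed

lemma mat_apply_add_matrix: "mat_apply a (M + N) v = mat_apply a M v + mat_apply a N v"
  by (auto simp: mat_apply_def fun_eq_iff algebra_simps sum.distrib)

lemma mat_apply_scale_matrix: "mat_apply a (\<lambda>p q. c * M p q) v = scaleV c (mat_apply a M v)"
  by (auto simp: mat_apply_def scaleV_def fun_eq_iff algebra_simps sum_distrib_left)

lemma mat_apply_zero_matrix: "mat_apply a 0 v = 0"
  by (auto simp: mat_apply_def fun_eq_iff)

lemma homT_add: "homT a b M \<Longrightarrow> homT a b N \<Longrightarrow> homT a b (M + N)"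
  by (simp add: homT_def mat_apply_add_matrix VecVec.linear_add[OF linear_shiftT])

lemma homT_scale: "homT a b M \<Longrightarrow> homT a b (\<lambda>p q. c * M p q)"
  by (simp add: homT_def mat_apply_scale_matrix VecVec.linear_scale[OF linear_shiftT])

lemma homT_zero: "homT a b 0"
  by (simp add: homT_def mat_apply_zero_matrix VecVec.linear_0[OF linear_shiftT])

section \<open>Morphisms out of pickets and bipickets\<close>

lemma Hom_subspace: "Mat.subspace (Hom X Y)"
proof -
  obtain l m \<phi> a b f where X: "X = (l, m, \<phi>)" and Y: "Y = (a, b, f)" by (cases X, cases Y)
  show ?thesis
    unfolding Mat.subspace_def X Y Hom_def
    by (auto simp: homT_add homT_scale homT_zero scaleM_def zero_prod_def mat_apply_add_matrix
        mat_apply_scale_matrix mat_apply_zero_matrix VecVec.linear_add[OF linear_mat_apply]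
        VecVec.linear_scale[OF linear_mat_apply] VecVec.linear_0[OF linear_mat_apply])
qed

lemma Hom_subset_span_finite:
  fixes X Y :: "'k::field obj"
  shows "\<exists>F. finite F \<and> Hom X Y \<subseteq> Mat.span F"
proof -
  obtain l m \<phi> a b f where X: "X = (l, m, \<phi>)" and Y: "Y = (a, b, f)" by (cases X, cases Y)
  define E :: "nat \<times> nat \<Rightarrow> nat \<times> nat \<Rightarrow> 'k mat" where
    "E p q = (\<lambda>p' q'. if p' = p \<and> q' = q then 1 else 0)" for p q
  define I where "I = idx a \<times> idx l"
  define J where "J = idx b \<times> idx m"
  define F where "F = (\<lambda>(p, q). (E p q, 0)) ` I \<union> (\<lambda>(p, q). (0, E p q)) ` J"
  have fin: "finite I" "finite J" by (simp_all add: I_def J_def finite_idx)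
  have expand: "(\<Sum>(p, q)\<in>K. M p q * E p q p' q') = M p' q'"
    if "finite K" and "\<forall>p q. (p, q) \<notin> K \<longrightarrow> M p q = 0" for K M p' q'
  proof -
    have "(\<Sum>(p, q)\<in>K. M p q * E p q p' q') = (\<Sum>pq\<in>K. if pq = (p', q') then M p' q' else 0)"
      by (intro sum.cong) (auto simp: E_def split: if_splits)
    then show ?thesis using that(1) that(2)[rule_format, of p' q'] by (simp add: sum.delta)
  qed
  have span_I: "scaleM c (E p q, 0) \<in> Mat.span F" if "(p, q) \<in> I" for c p q
    using that by (intro Mat.span_scale Mat.span_base) (force simp: F_def)
  have span_J: "scaleM c (0, E p q) \<in> Mat.span F" if "(p, q) \<in> J" for c p q
    using that by (intro Mat.span_scale Mat.span_base) (force simp: F_def)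
  have "P \<in> Mat.span F" if HP: "P \<in> Hom X Y" for P
  proof -
    obtain P1 P2 where P: "P = (P1, P2)" and P1: "homT l a P1" and P2: "homT m b P2"
      using HP by (cases P) (auto simp: X Y Hom_def)
    have "P = (\<Sum>(p, q)\<in>I. scaleM (P1 p q) (E p q, 0)) + (\<Sum>(p, q)\<in>J. scaleM (P2 p q) (0, E p q))"
      using expand[OF fin(1), of P1] expand[OF fin(2), of P2] homT_eq_0[OF P1] homT_eq_0[OF P2]
      by (simp add: P I_def J_def prod_eq_iff fst_sum snd_sum sum_fun_apply scaleM_def
          case_prod_unfold fun_eq_iff)
    also have "\<dots> \<in> Mat.span F"
      by (intro Mat.span_add Mat.span_sum) (auto intro: span_I span_J)
    finally show ?thesis .
  qed
  moreover have "finite F" using fin by (simp add: F_def)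
  ultimately show ?thesis by blast
qed

lemma Hom_cyclic_source_iff:
  fixes f :: "'k::field mat"
  assumes l: "0 < l" and w: "w \<in> vecs m" "(shiftT m ^^ l) w = 0" and f: "homT a b f"
  shows "(p1, p2) \<in> Hom ([l], m, gen_map [l] m (\<lambda>_. w)) (a, b, f) \<longleftrightarrow>
    (\<exists>x\<in>vecs a. (shiftT a ^^ l) x = 0 \<and> p1 = gen_map [l] a (\<lambda>_. x)
       \<and> mat_apply a f x = mat_apply m p2 w) \<and> homT m b p2"
proof -
  have l0: "0 \<notin> set [l]" using l by simp
  have \<phi>: "homT [l] m (gen_map [l] m (\<lambda>_. w))" using homT_one_part_iff[OF l] w by blast
  have gen: "column (gen_map [l] n (\<lambda>_. u)) (0, 0) = u" for n and u :: "'k vec"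
    using l by (simp add: column_gen_map idx_def)
  have compat: "(\<forall>v\<in>vecs [l]. mat_apply a f (mat_apply [l] p1 v)
        = mat_apply m p2 (mat_apply [l] (gen_map [l] m (\<lambda>_. w)) v))
      \<longleftrightarrow> mat_apply a f (column p1 (0, 0)) = mat_apply m p2 w"
    if p1: "homT [l] a p1" and p2: "homT m b p2"
    using homT_eq_on_vecs_iff[OF l0 homT_mat_comp[OF p1 f] homT_mat_comp[OF \<phi> p2]]
    by (simp add: mat_apply_mat_comp column_mat_comp gen)
  show ?thesis
  proof
    assume "(p1, p2) \<in> Hom ([l], m, gen_map [l] m (\<lambda>_. w)) (a, b, f)"
    then have p1: "homT [l] a p1" and p2: "homT m b p2" and c: "\<forall>v\<in>vecs [l].
        mat_apply a f (mat_apply [l] p1 v) = mat_apply m p2 (mat_apply [l] (gen_map [l] m (\<lambda>_. w)) v)"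
      by (simp_all add: Hom_def)
    obtain x where x: "x \<in> vecs a" "(shiftT a ^^ l) x = 0" "p1 = gen_map [l] a (\<lambda>_. x)"
      using p1 homT_one_part_iff[OF l] by blast
    have "mat_apply a f x = mat_apply m p2 w" using compat[OF p1 p2] c x(3) gen by simp
    then show "(\<exists>x\<in>vecs a. (shiftT a ^^ l) x = 0 \<and> p1 = gen_map [l] a (\<lambda>_. x)
       \<and> mat_apply a f x = mat_apply m p2 w) \<and> homT m b p2"
      using x p2 by blast
  next
    assume "(\<exists>x\<in>vecs a. (shiftT a ^^ l) x = 0 \<and> p1 = gen_map [l] a (\<lambda>_. x)
       \<and> mat_apply a f x = mat_apply m p2 w) \<and> homT m b p2"
    then obtain x where x: "x \<in> vecs a" "(shiftT a ^^ l) x = 0" "p1 = gen_map [l] a (\<lambda>_. x)"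
      "mat_apply a f x = mat_apply m p2 w" and p2: "homT m b p2" by blast
    have p1: "homT [l] a p1" using homT_one_part_iff[OF l] x(1-3) by blast
    have "\<forall>v\<in>vecs [l].
        mat_apply a f (mat_apply [l] p1 v) = mat_apply m p2 (mat_apply [l] (gen_map [l] m (\<lambda>_. w)) v)"
      using compat[OF p1 p2] x(3,4) gen by simp
    then show "(p1, p2) \<in> Hom ([l], m, gen_map [l] m (\<lambda>_. w)) (a, b, f)"
      using p1 p2 by (simp add: Hom_def)
  qed
qed

lemma picket_eq_gen_map:
  "0 < l \<Longrightarrow> l \<le> m \<Longrightarrow> picket l m = ([l], [m], gen_map [l] [m] (\<lambda>_. basisv (0, m - l)))"
  by (simp add: picket_def plist_def cyc_map_eq_gen_map)

lemma bipicket_eq_gen_map: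
  "bipicket m r = ([2], [m, r], gen_map [2] [m, r] (\<lambda>_. basisv (0, m - 2) + basisv (1, r - 1)))"
  by (simp add: bipicket_def plist_def cyc_map_eq_gen_map)

lemma Hom_picket:
  fixes f :: "'k::field mat"
  assumes l: "0 < l" and lm: "l \<le> m" and f: "homT a b f"
  shows "Hom (picket l m) (a, b, f) = {(gen_map [l] a (\<lambda>_. x), gen_map [m] b (\<lambda>_. y)) | x y.
      x \<in> vecs a \<and> (shiftT a ^^ l) x = 0 \<and> y \<in> vecs b \<and> (shiftT b ^^ m) y = 0
      \<and> mat_apply a f x = (shiftT b ^^ (m - l)) y}"
proof (intro set_eqI)
  have m: "0 < m" using l lm by simp
  have e: "(0, m - l) \<in> idx [m]" using l m by (simp add: idx_def)
  have w: "basisv (0, m - l) \<in> vecs [m]" "(shiftT [m] ^^ l) (basisv (0, m - l)) = 0"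
    using e lm by (auto intro: basisv_in_vecs funpow_shiftT_basisv_eq_0)
  have app: "mat_apply [m] (gen_map [m] b (\<lambda>_. y)) (basisv (0, m - l)) = (shiftT b ^^ (m - l)) y" for y
    using mat_apply_gen_map_basisv[OF e, of b "\<lambda>_. y"] by simp
  fix P :: "'k mat \<times> 'k mat"
  obtain p1 p2 where P: "P = (p1, p2)" by (cases P)
  show "P \<in> Hom (picket l m) (a, b, f) \<longleftrightarrow> P \<in> {(gen_map [l] a (\<lambda>_. x), gen_map [m] b (\<lambda>_. y)) | x y.
      x \<in> vecs a \<and> (shiftT a ^^ l) x = 0 \<and> y \<in> vecs b \<and> (shiftT b ^^ m) y = 0
      \<and> mat_apply a f x = (shiftT b ^^ (m - l)) y}"
    unfolding P picket_eq_gen_map[OF l lm] Hom_cyclic_source_iff[OF l w f] homT_one_part_iff[OF m]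
    by (auto simp: app; blast)
qed

lemma Hom_bipicket:
  fixes f :: "'k::field mat"
  assumes m: "2 \<le> m" and r: "0 < r" and f: "homT a b f"
  shows "Hom (bipicket m r) (a, b, f) =
    {(gen_map [2] a (\<lambda>_. x), gen_map [m, r] b (\<lambda>i. if i = 0 then y1 else y2)) | x y1 y2.
      x \<in> vecs a \<and> (shiftT a ^^ 2) x = 0 \<and> y1 \<in> vecs b \<and> (shiftT b ^^ m) y1 = 0
      \<and> y2 \<in> vecs b \<and> (shiftT b ^^ r) y2 = 0
      \<and> mat_apply a f x = (shiftT b ^^ (m - 2)) y1 + (shiftT b ^^ (r - 1)) y2}"
proof (intro set_eqI)
  have two: "0 < (2::nat)" and m0: "0 < m" using m by simp_all
  have e: "(0, m - 2) \<in> idx [m, r]" "(1, r - 1) \<in> idx [m, r]" using m r by (auto simp: idx_def)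
  define w :: "'k vec" where "w = basisv (0, m - 2) + basisv (1, r - 1)"
  have "(shiftT [m, r] ^^ 2) (basisv (0, m - 2) :: 'k vec) = 0"
    "(shiftT [m, r] ^^ 2) (basisv (1, r - 1) :: 'k vec) = 0"
    using e m by (auto intro!: funpow_shiftT_basisv_eq_0)
  then have w: "w \<in> vecs [m, r]" "(shiftT [m, r] ^^ 2) w = 0"
    unfolding w_def VecVec.linear_add[OF linear_funpow[OF linear_shiftT]]
    using Vec.subspace_add[OF subspace_vecs basisv_in_vecs[OF e(1)] basisv_in_vecs[OF e(2)]] by simp_all
  have app: "mat_apply [m, r] (gen_map [m, r] b (\<lambda>i. if i = 0 then y1 else y2)) w
      = (shiftT b ^^ (m - 2)) y1 + (shiftT b ^^ (r - 1)) y2" for y1 y2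
    unfolding w_def VecVec.linear_add[OF linear_mat_apply]
      mat_apply_gen_map_basisv[OF e(1)] mat_apply_gen_map_basisv[OF e(2)] by simp
  fix P :: "'k mat \<times> 'k mat"
  obtain p1 p2 where P: "P = (p1, p2)" by (cases P)
  show "P \<in> Hom (bipicket m r) (a, b, f) \<longleftrightarrow> P \<in>
    {(gen_map [2] a (\<lambda>_. x), gen_map [m, r] b (\<lambda>i. if i = 0 then y1 else y2)) | x y1 y2.
      x \<in> vecs a \<and> (shiftT a ^^ 2) x = 0 \<and> y1 \<in> vecs b \<and> (shiftT b ^^ m) y1 = 0
      \<and> y2 \<in> vecs b \<and> (shiftT b ^^ r) y2 = 0
      \<and> mat_apply a f x = (shiftT b ^^ (m - 2)) y1 + (shiftT b ^^ (r - 1)) y2}"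
    unfolding P bipicket_eq_gen_map w_def[symmetric] Hom_cyclic_source_iff[OF two w f]
      homT_two_parts_iff[OF m0 r]
    by (auto simp: app; blast)
qed

lemma Hom_picket_0: "Hom (picket 0 m) (a, b, f) = {(p1, p2). homT [] a p1 \<and> homT (plist m) b p2}"
  by (auto simp: Hom_def picket_def plist_def mat_apply_def idx_def)

section \<open>Dimensions of the Hom spaces\<close>

text \<open>The values \<open>\<psi>\<^sub>2(1)\<close> of the morphisms \<open>(\<psi>\<^sub>1, \<psi>\<^sub>2) : P\<^sub>l\<^sup>m \<rightarrow> (N\<^sub>a, N\<^sub>b, f)\<close>.\<close>

definition picket_gen_images :: "nat \<Rightarrow> nat \<Rightarrow> nat list \<Rightarrow> nat list \<Rightarrow> 'k::field mat \<Rightarrow> 'k vec set" where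
  "picket_gen_images l m a b f = {y \<in> vecs b. (shiftT b ^^ m) y = 0 \<and>
     (\<exists>x\<in>vecs a. (shiftT a ^^ l) x = 0 \<and> mat_apply a f x = (shiftT b ^^ (m - l)) y)}"

lemma column_gen_map_one_part: "0 < m \<Longrightarrow> column (gen_map [m] b (\<lambda>_. y)) (0, 0) = y"
  by (simp add: column_gen_map idx_def)

lemma image_Hom_picket:
  assumes l: "0 < l" and lm: "l \<le> m" and f: "homT a b f"
  shows "(\<lambda>P. column (snd P) (0, 0)) ` Hom (picket l m) (a, b, f) = picket_gen_images l m a b f"
proof -
  have m: "0 < m" using l lm by simp
  show ?thesis
  proof (intro set_eqI iffI)
    fix y
    assume "y \<in> (\<lambda>P. column (snd P) (0, 0)) ` Hom (picket l m) (a, b, f)"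
    then obtain x y' where "y = column (gen_map [m] b (\<lambda>_. y')) (0, 0)" "x \<in> vecs a"
      "(shiftT a ^^ l) x = 0" "y' \<in> vecs b" "(shiftT b ^^ m) y' = 0"
      "mat_apply a f x = (shiftT b ^^ (m - l)) y'"
      unfolding Hom_picket[OF assms] by auto
    then show "y \<in> picket_gen_images l m a b f"
      unfolding picket_gen_images_def column_gen_map_one_part[OF m] by blast
  next
    fix y assume "y \<in> picket_gen_images l m a b f"
    then obtain x where "y \<in> vecs b" "(shiftT b ^^ m) y = 0" "x \<in> vecs a" "(shiftT a ^^ l) x = 0"
      "mat_apply a f x = (shiftT b ^^ (m - l)) y"
      unfolding picket_gen_images_def by blast
    then have "(gen_map [l] a (\<lambda>_. x), gen_map [m] b (\<lambda>_. y)) \<in> Hom (picket l m) (a, b, f)"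
      unfolding Hom_picket[OF assms] by blast
    then show "y \<in> (\<lambda>P. column (snd P) (0, 0)) ` Hom (picket l m) (a, b, f)"
      by (rule rev_image_eqI) (simp add: column_gen_map_one_part[OF m])
  qed
qed

lemma homdim_picket:
  assumes l: "0 < l" and lm: "l \<le> m" and f: "homT a b f" and inj: "inj_on (mat_apply a f) (vecs a)"
  shows "homdim (picket l m) (a, b, f) = Vec.dim (picket_gen_images l m a b f)"
proof -
  have m: "0 < m" using l lm by simp
  have "inj_on (\<lambda>P. column (snd P) (0, 0)) (Hom (picket l m) (a, b, f))"
  proof (rule inj_onI)
    fix P Q assume "P \<in> Hom (picket l m) (a, b, f)" "Q \<in> Hom (picket l m) (a, b, f)"
      and eq: "column (snd P) (0, 0) = column (snd Q) (0, 0)"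
    then obtain x y x' y' where P: "P = (gen_map [l] a (\<lambda>_. x), gen_map [m] b (\<lambda>_. y))"
      and Q: "Q = (gen_map [l] a (\<lambda>_. x'), gen_map [m] b (\<lambda>_. y'))"
      and x: "x \<in> vecs a" "x' \<in> vecs a"
      and fx: "mat_apply a f x = (shiftT b ^^ (m - l)) y" "mat_apply a f x' = (shiftT b ^^ (m - l)) y'"
      unfolding Hom_picket[OF assms(1-3)] by blast
    have "y = y'" using eq by (simp add: P Q column_gen_map_one_part[OF m])
    then have "x = x'" using fx x inj by (metis inj_onD)
    then show "P = Q" using P Q \<open>y = y'\<close> by simp
  qed
  then have "Vec.dim ((\<lambda>P. column (snd P) (0, 0)) ` Hom (picket l m) (a, b, f))
      = Mat.dim (Hom (picket l m) (a, b, f))"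
    by (rule MatVec.dim_image_eq_of_inj_on[OF linear_column_snd Hom_subspace])
  then show ?thesis unfolding homdim_def image_Hom_picket[OF assms(1-3)] by simp
qed

lemma homdim_picket_1_1:
  fixes f :: "'k::field mat"
  assumes f: "homT a b f" and inj: "inj_on (mat_apply a f) (vecs a)"
  shows "homdim (picket 1 1) (a, b, f) = Vec.dim {x \<in> vecs a. shiftT a x = (0 :: 'k vec)}"
proof -
  let ?S = "{x \<in> vecs a. shiftT a x = 0}"
  have "picket_gen_images 1 1 a b f = mat_apply a f ` ?S"
  proof (intro set_eqI iffI)
    fix y assume "y \<in> picket_gen_images 1 1 a b f"
    then show "y \<in> mat_apply a f ` ?S" by (auto simp: picket_gen_images_def)
  next
    fix y assume "y \<in> mat_apply a f ` ?S"
    then obtain x where x: "x \<in> vecs a" "shiftT a x = 0" and y: "y = mat_apply a f x" by blast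
    have "shiftT b y = 0"
      using homT_funpow_commute[OF f x(1), of 1] x(2) by (simp add: y VecVec.linear_0[OF linear_mat_apply])
    then show "y \<in> picket_gen_images 1 1 a b f"
      using x homT_mat_apply_in_vecs[OF f] by (auto simp: picket_gen_images_def y)
  qed
  moreover have "Vec.subspace ?S"
    using Vec.subspace_inter[OF subspace_vecs VecVec.linear_subspace_kernel[OF linear_shiftT]]
    by (simp add: Int_def)
  moreover have "inj_on (mat_apply a f) ?S" using inj by (rule inj_on_subset) blast
  ultimately show ?thesis
    using homdim_picket[OF _ _ f inj, of 1 1] VecVec.dim_image_eq_of_inj_on[OF linear_mat_apply]
    by simp
qed

lemma homdim_picket_2:
  fixes f g :: "'k::field mat"
  assumes f: "homT a b f" and inj: "inj_on (mat_apply a f) (vecs a)" and a2: "\<forall>x\<in>set a. x \<le> 2"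
    and g: "homT b c g" and g_onto: "mat_apply b g ` vecs b = vecs c"
    and exact: "{v \<in> vecs b. mat_apply b g v = 0} = mat_apply a f ` vecs a"
    and m: "2 \<le> m"
  shows "homdim (picket 2 m) (a, b, f) + Vec.dim ((shiftT c ^^ (m - 2)) ` vecs c :: 'k vec set)
    = Vec.dim (vecs b :: 'k vec set)"
proof -
  define h where "h = mat_apply b g \<circ> (shiftT b ^^ (m - 2))"
  have h: "Vector_Spaces.linear scaleV scaleV h"
    unfolding h_def by (rule Vector_Spaces.linear_compose[OF linear_funpow[OF linear_shiftT] linear_mat_apply])
  have "picket_gen_images 2 m a b f = {y \<in> vecs b. h y = 0}"
  proof (intro set_eqI iffI)
    fix y assume "y \<in> picket_gen_images 2 m a b f"
    then obtain x where "y \<in> vecs b" "x \<in> vecs a" "mat_apply a f x = (shiftT b ^^ (m - 2)) y"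
      unfolding picket_gen_images_def by blast
    then show "y \<in> {y \<in> vecs b. h y = 0}" using exact by (force simp: h_def)
  next
    fix y assume "y \<in> {y \<in> vecs b. h y = 0}"
    then have y: "y \<in> vecs b" and "(shiftT b ^^ (m - 2)) y \<in> {v \<in> vecs b. mat_apply b g v = 0}"
      using funpow_shiftT_in_vecs by (auto simp: h_def)
    then obtain x where x: "x \<in> vecs a" "mat_apply a f x = (shiftT b ^^ (m - 2)) y"
      using exact by auto
    have x2: "(shiftT a ^^ 2) x = 0" using funpow_shiftT_eq_0[OF x(1) a2] .
    have "(shiftT b ^^ m) y = (shiftT b ^^ 2) ((shiftT b ^^ (m - 2)) y)"
      using m by (metis funpow_add le_add_diff_inverse comp_apply)
    also have "\<dots> = 0"
      using homT_funpow_commute[OF f x(1), of 2] x(2) x2 by (simp add: VecVec.linear_0[OF linear_mat_apply])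
    finally show "y \<in> picket_gen_images 2 m a b f"
      unfolding picket_gen_images_def using y x x2 by blast
  qed
  moreover have "h ` vecs b = (shiftT c ^^ (m - 2)) ` vecs c"
  proof -
    have "h y = (shiftT c ^^ (m - 2)) (mat_apply b g y)" if "y \<in> vecs b" for y
      using homT_funpow_commute[OF g that] by (simp add: h_def)
    then have "h ` vecs b = (shiftT c ^^ (m - 2)) ` mat_apply b g ` vecs b"
      by (simp add: image_image)
    then show ?thesis using g_onto by simp
  qed
  moreover have "Vec.dim {y \<in> vecs b. h y = 0} + Vec.dim (h ` vecs b) = Vec.dim (vecs b :: 'k vec set)"
    by (rule VecVec.dim_kernel_add_dim_image[OF h subspace_vecs finite_imageI[OF finite_idx]
        vecs_subset_span_basisv])
  ultimately show ?thesis using homdim_picket[OF _ m f inj] by simp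
qed

lemma column_gen_map_two_parts:
  assumes "0 < m" and "0 < r"
  shows "column (gen_map [m, r] b (\<lambda>i. if i = 0 then y1 else y2)) (0, 0) = y1"
    and "column (gen_map [m, r] b (\<lambda>i. if i = 0 then y1 else y2)) (1, 0) = y2"
  using assms by (simp_all add: column_gen_map idx_def)

lemma image_Hom_bipicket_second_generator:
  fixes f :: "'k::field mat"
  assumes f: "homT a b f" and inj: "inj_on (mat_apply a f) (vecs a)"
    and m: "2 \<le> m" and big: "\<forall>x\<in>set b. x + 2 \<le> m" and r: "0 < r"
  shows "(\<lambda>P. column (snd P) (1, 0)) ` Hom (bipicket m r) (a, b, f) = picket_gen_images 1 r a b f"
proof -
  have m0: "0 < m" using m by simp
  show ?thesis
  proof (intro set_eqI iffI)
    fix y :: "'k vec"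
    assume "y \<in> (\<lambda>P. column (snd P) (1, 0)) ` Hom (bipicket m r) (a, b, f)"
    then obtain x y1 where x: "x \<in> vecs a" and y1: "y1 \<in> vecs b"
      and y: "y \<in> vecs b" "(shiftT b ^^ r) y = 0"
      and fx: "mat_apply a f x = (shiftT b ^^ (m - 2)) y1 + (shiftT b ^^ (r - 1)) y"
      unfolding Hom_bipicket[OF m r f] by (auto simp: column_gen_map_two_parts[OF m0 r, simplified])
    have fx': "mat_apply a f x = (shiftT b ^^ (r - 1)) y"
      using fx funpow_shiftT_eq_0[OF y1, of "m - 2"] big by force
    have "mat_apply a f (shiftT a x) = mat_apply a f 0"
      using homT_funpow_commute[OF f x, of 1] fx' y(2)
      by (simp add: funpow_pred_apply[OF r, simplified] VecVec.linear_0[OF linear_mat_apply])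
    then have "shiftT a x = 0" using inj shiftT_in_vecs zero_in_vecs by (metis inj_onD)
    then show "y \<in> picket_gen_images 1 r a b f"
      unfolding picket_gen_images_def using x y fx' by auto
  next
    fix y :: "'k vec"
    assume "y \<in> picket_gen_images 1 r a b f"
    then obtain x where x: "x \<in> vecs a" "shiftT a x = 0" and y: "y \<in> vecs b" "(shiftT b ^^ r) y = 0"
      and fx: "mat_apply a f x = (shiftT b ^^ (r - 1)) y"
      unfolding picket_gen_images_def by auto
    have "(shiftT a ^^ 2) x = 0"
      using x(2) by (simp add: numeral_2_eq_2 VecVec.linear_0[OF linear_shiftT])
    then have "(gen_map [2] a (\<lambda>_. x), gen_map [m, r] b (\<lambda>i. if i = 0 then 0 else y))
        \<in> Hom (bipicket m r) (a, b, f)"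
      unfolding Hom_bipicket[OF m r f] using x(1) y fx zero_in_vecs
      by (intro CollectI exI[of _ x] exI[of _ 0] exI[of _ y] conjI)
        (auto simp: VecVec.linear_0[OF linear_funpow[OF linear_shiftT]])
    then show "y \<in> (\<lambda>P. column (snd P) (1, 0)) ` Hom (bipicket m r) (a, b, f)"
      by (rule rev_image_eqI) (simp add: column_gen_map_two_parts[OF m0 r, simplified])
  qed
qed

lemma dim_Hom_bipicket_kernel:
  fixes f :: "'k::field mat"
  assumes f: "homT a b f" and inj: "inj_on (mat_apply a f) (vecs a)"
    and m: "2 \<le> m" and big: "\<forall>x\<in>set b. x + 2 \<le> m" and r: "0 < r"
  shows "Mat.dim {P \<in> Hom (bipicket m r) (a, b, f). column (snd P) (1, 0) = 0} = Vec.dim (vecs b :: 'k vec set)"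
proof -
  let ?K = "{P \<in> Hom (bipicket m r) (a, b, f). column (snd P) (1, 0) = 0}"
  have m0: "0 < m" using m by simp
  have killed: "(shiftT b ^^ n) y = 0" if "y \<in> vecs b" "m - 2 \<le> n" for y :: "'k vec" and n
    by (rule funpow_shiftT_eq_0[OF that(1)]) (use big that(2) in auto)
  have K: "Mat.subspace ?K"
    using Mat.subspace_inter[OF Hom_subspace MatVec.linear_subspace_kernel[OF linear_column_snd]]
    by (simp add: Int_def)
  have in_K: "P \<in> ?K \<longleftrightarrow> (\<exists>y1. P = (gen_map [2] a (\<lambda>_. 0), gen_map [m, r] b (\<lambda>i. if i = 0 then y1 else 0))
      \<and> y1 \<in> vecs b)" for P
  proof
    assume "P \<in> ?K"
    then obtain x y1 where P: "P = (gen_map [2] a (\<lambda>_. x), gen_map [m, r] b (\<lambda>i. if i = 0 then y1 else 0))"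
      and x: "x \<in> vecs a" and y1: "y1 \<in> vecs b"
      and fx: "mat_apply a f x = (shiftT b ^^ (m - 2)) y1 + (shiftT b ^^ (r - 1)) 0"
      unfolding Hom_bipicket[OF m r f] by (auto simp: column_gen_map_two_parts[OF m0 r, simplified])
    have "mat_apply a f x = mat_apply a f 0"
      using fx killed[OF y1]
      by (simp add: VecVec.linear_0[OF linear_mat_apply] VecVec.linear_0[OF linear_funpow[OF linear_shiftT]])
    then have "x = 0" using inj x zero_in_vecs by (metis inj_onD)
    then show "\<exists>y1. P = (gen_map [2] a (\<lambda>_. 0), gen_map [m, r] b (\<lambda>i. if i = 0 then y1 else 0))
      \<and> y1 \<in> vecs b" using P y1 by blast
  next
    assume "\<exists>y1. P = (gen_map [2] a (\<lambda>_. 0), gen_map [m, r] b (\<lambda>i. if i = 0 then y1 else 0)) \<and> y1 \<in> vecs b"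
    then obtain y1 where P: "P = (gen_map [2] a (\<lambda>_. 0), gen_map [m, r] b (\<lambda>i. if i = 0 then y1 else 0))"
      and y1: "y1 \<in> vecs b" by blast
    have "P \<in> Hom (bipicket m r) (a, b, f)"
      unfolding Hom_bipicket[OF m r f] P using y1 killed[OF y1] zero_in_vecs m
      by (intro CollectI exI[of _ 0] exI[of _ y1] exI[of _ 0] conjI)
        (auto simp: VecVec.linear_0[OF linear_mat_apply] VecVec.linear_0[OF linear_funpow[OF linear_shiftT]])
    then show "P \<in> ?K" by (simp add: P column_gen_map_two_parts[OF m0 r, simplified])
  qed
  have img: "(\<lambda>P. column (snd P) (0, 0)) ` ?K = vecs b"
  proof (intro set_eqI iffI)
    fix y assume "y \<in> (\<lambda>P. column (snd P) (0, 0)) ` ?K"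
    then show "y \<in> vecs b" using in_K by (auto simp: column_gen_map_two_parts[OF m0 r])
  next
    fix y :: "'k vec" assume "y \<in> vecs b"
    then have "(gen_map [2] a (\<lambda>_. 0), gen_map [m, r] b (\<lambda>i. if i = 0 then y else 0)) \<in> ?K"
      unfolding in_K by blast
    then show "y \<in> (\<lambda>P. column (snd P) (0, 0)) ` ?K"
      by (rule rev_image_eqI) (simp add: column_gen_map_two_parts[OF m0 r])
  qed
  have "inj_on (\<lambda>P. column (snd P) (0, 0)) ?K"
    using in_K by (auto simp: inj_on_def column_gen_map_two_parts[OF m0 r, simplified])
  then have "Vec.dim ((\<lambda>P. column (snd P) (0, 0)) ` ?K) = Mat.dim ?K"
    by (rule MatVec.dim_image_eq_of_inj_on[OF linear_column_snd K])
  then show ?thesis using img by simp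
qed

lemma homdim_bipicket:
  fixes f :: "'k::field mat"
  assumes f: "homT a b f" and inj: "inj_on (mat_apply a f) (vecs a)"
    and m: "2 \<le> m" and big: "\<forall>x\<in>set b. x + 2 \<le> m" and r: "0 < r"
  shows "homdim (bipicket m r) (a, b, f) = Vec.dim (vecs b :: 'k vec set) + homdim (picket 1 r) (a, b, f)"
proof -
  obtain F where "finite F" "Hom (bipicket m r) (a, b, f) \<subseteq> Mat.span F"
    using Hom_subset_span_finite by blast
  then have "Mat.dim {P \<in> Hom (bipicket m r) (a, b, f). column (snd P) (1, 0) = 0}
      + Vec.dim ((\<lambda>P. column (snd P) (1, 0)) ` Hom (bipicket m r) (a, b, f))
      = Mat.dim (Hom (bipicket m r) (a, b, f))"
    by (rule MatVec.dim_kernel_add_dim_image[OF linear_column_snd Hom_subspace])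
  then show ?thesis
    using dim_Hom_bipicket_kernel[OF assms] image_Hom_bipicket_second_generator[OF assms]
      homdim_picket[OF _ _ f inj, of 1 r] r
    unfolding homdim_def by simp
qed

lemma is_obj2_has_typeE:
  fixes Y :: "'k::field obj"
  assumes "is_obj2 Y" and "has_type Y a b c"
  obtains f g where "Y = (a, b, f)" "homT a b f" "inj_on (mat_apply a f) (vecs a)" "\<forall>x\<in>set a. x \<le> 2"
    "homT b c g" "mat_apply b g ` vecs b = vecs c"
    "{v \<in> vecs b. mat_apply b g v = 0} = mat_apply a f ` vecs a"
proof -
  obtain f where Y: "Y = (a, b, f)" using assms(2) unfolding has_type_def by (metis prod.collapse)
  moreover have "homT a b f" "inj_on (mat_apply a f) (vecs a)" "\<forall>x\<in>set a. x \<le> 2"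
    using assms(1) unfolding is_obj2_def is_obj_def Y by auto
  moreover obtain g where "homT b c g" "mat_apply b g ` vecs b = vecs c"
    "{v \<in> vecs b. mat_apply b g v = 0} = mat_apply a f ` vecs a"
    using assms(2) unfolding has_type_def Y zero_fun_def by auto
  ultimately show ?thesis using that by blast
qed

lemma homdim_of_partition_type:
  fixes Y :: "'k::field obj"
  assumes "is_obj2 Y" and "has_type Y a b c"
  shows "homdim (picket 1 1) Y = Vec.dim {x \<in> vecs a. shiftT a x = (0 :: 'k vec)}"
    and "homdim (picket 0 m) Y = Mat.dim {(p1, p2 :: 'k mat). homT [] a p1 \<and> homT (plist m) b p2}"
    and "2 \<le> m \<Longrightarrow> homdim (picket 2 m) Y + Vec.dim ((shiftT c ^^ (m - 2)) ` vecs c :: 'k vec set)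
      = Vec.dim (vecs b :: 'k vec set)"
    and "2 \<le> m \<Longrightarrow> \<forall>x\<in>set b. x + 2 \<le> m \<Longrightarrow> 0 < r \<Longrightarrow>
      homdim (bipicket m r) Y = Vec.dim (vecs b :: 'k vec set) + homdim (picket 1 r) Y"
proof -
  obtain f g where Y: "Y = (a, b, f)" and f: "homT a b f" "inj_on (mat_apply a f) (vecs a)"
    "\<forall>x\<in>set a. x \<le> 2" and g: "homT b c g" "mat_apply b g ` vecs b = vecs c"
    "{v \<in> vecs b. mat_apply b g v = 0} = mat_apply a f ` vecs a"
    by (rule is_obj2_has_typeE[OF assms])
  show "homdim (picket 1 1) Y = Vec.dim {x \<in> vecs a. shiftT a x = (0 :: 'k vec)}"
    unfolding Y by (rule homdim_picket_1_1[OF f(1,2)])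
  show "homdim (picket 0 m) Y = Mat.dim {(p1, p2 :: 'k mat). homT [] a p1 \<and> homT (plist m) b p2}"
    by (simp add: Y homdim_def Hom_picket_0)
  show "2 \<le> m \<Longrightarrow> homdim (picket 2 m) Y + Vec.dim ((shiftT c ^^ (m - 2)) ` vecs c :: 'k vec set)
      = Vec.dim (vecs b :: 'k vec set)"
    unfolding Y by (rule homdim_picket_2[OF f g])
  show "2 \<le> m \<Longrightarrow> \<forall>x\<in>set b. x + 2 \<le> m \<Longrightarrow> 0 < r \<Longrightarrow>
      homdim (bipicket m r) Y = Vec.dim (vecs b :: 'k vec set) + homdim (picket 1 r) Y"
    unfolding Y by (rule homdim_bipicket[OF f(1,2)])
qed

theorem lemma4p2:
  fixes Y Z :: "'k::field obj" and a b c :: "nat list"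
  assumes "is_obj2 Y" and "is_obj2 Z"
    and "has_type Y a b c" and "has_type Z a b c"
  shows "deltaH Y Z (picket 1 1) = 0
         \<and> (\<forall>m. deltaH Y Z (picket 0 m) = 0)
         \<and> (\<forall>m. 2 \<le> m \<longrightarrow> deltaH Y Z (picket 2 m) = 0)
         \<and> (\<forall>r \<ge> 1. (\<lambda>m. real_of_int (deltaH Y Z (bipicket m r)))
                        \<longlonglongrightarrow> real_of_int (deltaH Y Z (picket 1 r)))"
proof (intro conjI allI impI)
  note dY = homdim_of_partition_type[OF assms(1,3)] and dZ = homdim_of_partition_type[OF assms(2,4)]
  show "deltaH Y Z (picket 1 1) = 0" using dY(1) dZ(1) by (simp add: deltaH_def)
  show "deltaH Y Z (picket 0 m) = 0" for m using dY(2) dZ(2) by (simp add: deltaH_def)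
  show "deltaH Y Z (picket 2 m) = 0" if "2 \<le> m" for m
    using dY(3)[OF that] dZ(3)[OF that] by (simp add: deltaH_def)
  show "(\<lambda>m. real_of_int (deltaH Y Z (bipicket m r))) \<longlonglongrightarrow> real_of_int (deltaH Y Z (picket 1 r))"
    if "1 \<le> r" for r
  proof (rule tendsto_eventually, rule eventually_sequentiallyI)
    fix m assume "sum_list b + 2 \<le> m"
    then have "2 \<le> m" "\<forall>x\<in>set b. x + 2 \<le> m" "0 < r" using member_le_sum_list \<open>1 \<le> r\<close> by fastforce+
    then show "real_of_int (deltaH Y Z (bipicket m r)) = real_of_int (deltaH Y Z (picket 1 r))"
      using dY(4) dZ(4) by (simp add: deltaH_def)
  qed
qed

end
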